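(* Let $G$ be a symmetric two-player game with action space $\mathcal{A}=\mathbb{R}$ and payoff function $u$ satisfying Assumptions (A1) and (A2) below, and let $\epsilon_R>0$. On the strategy space $\mathcal{S}=\mathcal{B}\cup\mathcal{R}$ with the penalized fitness $f(\sigma,\sigma')=u\big(r(\sigma,\sigma'),r(\sigma',\sigma)\big)-\epsilon_R\,\mathbb{I}[\sigma\in\mathcal{R}]$, the strategy $B(\mathrm{NE}(0,0))$ is the unique Nash equilibrium, and it is an evolutionarily stable strategy.
   Context: Base game: a symmetric two-player game $G$ with action set $\mathcal{A}=\mathbb{R}$; $u(x,y)$ denotes the payoff of a player who plays $x$ when the opponent plays $y$. Subjective utilities: for $\alpha\in\mathbb{R}$, $V^{\alpha}(x,y)=u(x,y)+\alpha\,u(y,x)$. For $\alpha_i,\alpha_j\in\mathbb{R}$, $G(\alpha_i,\alpha_j)$ is the game with the same actions in which player $i$ has payoff $V^{\alpha_i}$ and player $j$ has payoff $V^{\alpha_j}$. $\mathrm{NE}(\alpha_i,\alpha_j)$ denotes the action of the player with parameter $\alpha_i$ in the Nash equilibrium of $G(\alpha_i,\alpha_j)$ (the opponent plays $\mathrm{NE}(\alpha_j,\alpha_i)$). $\mathrm{BR}(b;\alpha)$ is the maximizer of $a\mapsto V^{\alpha}(a,b)$. Assumptions: (A1) for all $\alpha_i,\alpha_j$, $G(\alpha_i,\alpha_j)$ has a unique (pure) Nash equilibrium; (A2) for all $b,\alpha$, $a\mapsto V^{\alpha}(a,b)$ has a unique global maximum $\mathrm{BR}(b;\alpha)$. Strategies: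 $\mathcal{B}=\{B(a):a\in\mathcal{A}\}$ and $\mathcal{R}=\{R(\alpha):\alpha\in\mathbb{R}\}$, with actions $r(B(a),\sigma')=a$ for all $\sigma'$; $r(R(\alpha),B(b))=\mathrm{BR}(b;\alpha)$; $r(R(\alpha),R(\alpha'))=\mathrm{NE}(\alpha,\alpha')$. $\mathbb{I}[\cdot]$ is the indicator function. Stability notions relative to a strategy space $\Sigma$ and fitness $f$: $\sigma$ is a Nash equilibrium if $f(\sigma,\sigma)\ge f(\sigma',\sigma)$ for all $\sigma'\in\Sigma$; a neutrally stable strategy if it is a Nash equilibrium and for every $\sigma'$ with $f(\sigma',\sigma)=f(\sigma,\sigma)$ one has $f(\sigma,\sigma')\ge f(\sigma',\sigma')$; an evolutionarily stable strategy if moreover this inequality is strict for every such $\sigma'\neq\sigma$. *)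

theory Defs
  imports Main "HOL.Real"
begin

type_synonym payoff = "real \<Rightarrow> real \<Rightarrow> real"

definition V :: "payoff \<Rightarrow> real \<Rightarrow> real \<Rightarrow> real \<Rightarrow> real" where
  "V u \<alpha> x y = u x y + \<alpha> * u y x"

definition is_NE_pair :: "payoff \<Rightarrow> real \<Rightarrow> real \<Rightarrow> real \<Rightarrow> real \<Rightarrow> bool" where
  "is_NE_pair u \<alpha>i \<alpha>j x y \<longleftrightarrow>
     (\<forall>x'. V u \<alpha>i x' y \<le> V u \<alpha>i x y) \<and> (\<forall>y'. V u \<alpha>j y' x \<le> V u \<alpha>j y x)"

definition A1 :: "payoff \<Rightarrow> bool" where
  "A1 u \<longleftrightarrow> (\<forall>\<alpha>i \<alpha>j. \<exists>!p. is_NE_pair u \<alpha>i \<alpha>j (fst p) (snd p))"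

definition A2 :: "payoff \<Rightarrow> bool" where
  "A2 u \<longleftrightarrow> (\<forall>b \<alpha>. \<exists>!a. \<forall>a'. V u \<alpha> a' b \<le> V u \<alpha> a b)"

definition NE :: "payoff \<Rightarrow> real \<Rightarrow> real \<Rightarrow> real" where
  "NE u \<alpha>i \<alpha>j = fst (THE p. is_NE_pair u \<alpha>i \<alpha>j (fst p) (snd p))"

definition BR :: "payoff \<Rightarrow> real \<Rightarrow> real \<Rightarrow> real" where
  "BR u b \<alpha> = (THE a. \<forall>a'. V u \<alpha> a' b \<le> V u \<alpha> a b)"

text \<open>Strategies: B(a) (fixed action) and R(alpha) (rational with preference alpha).\<close>
datatype strat = B real | R real

fun act :: "payoff \<Rightarrow> strat \<Rightarrow> strat \<Rightarrow> real" where
  "act u (B a) s = a"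
| "act u (R \<alpha>) (B b) = BR u b \<alpha>"
| "act u (R \<alpha>) (R \<alpha>') = NE u \<alpha> \<alpha>'"

fun is_R :: "strat \<Rightarrow> bool" where
  "is_R (B a) = False"
| "is_R (R \<alpha>) = True"

definition fit :: "payoff \<Rightarrow> real \<Rightarrow> strat \<Rightarrow> strat \<Rightarrow> real" where
  "fit u \<epsilon> s s' = u (act u s s') (act u s' s) - \<epsilon> * (if is_R s then 1 else 0)"

definition nash_strat :: "'s set \<Rightarrow> ('s \<Rightarrow> 's \<Rightarrow> real) \<Rightarrow> 's \<Rightarrow> bool" where
  "nash_strat \<Sigma> f \<sigma> \<longleftrightarrow> \<sigma> \<in> \<Sigma> \<and> (\<forall>\<sigma>'\<in>\<Sigma>. f \<sigma> \<sigma> \<ge> f \<sigma>' \<sigma>)"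

definition ESS :: "'s set \<Rightarrow> ('s \<Rightarrow> 's \<Rightarrow> real) \<Rightarrow> 's \<Rightarrow> bool" where
  "ESS \<Sigma> f \<sigma> \<longleftrightarrow> nash_strat \<Sigma> f \<sigma> \<and>
     (\<forall>\<sigma>'\<in>\<Sigma>. f \<sigma>' \<sigma> = f \<sigma> \<sigma> \<longrightarrow> f \<sigma> \<sigma>' \<ge> f \<sigma>' \<sigma>') \<and>
     (\<forall>\<sigma>'\<in>\<Sigma>. \<sigma>' \<noteq> \<sigma> \<longrightarrow> f \<sigma>' \<sigma> = f \<sigma> \<sigma> \<longrightarrow> f \<sigma> \<sigma>' > f \<sigma>' \<sigma>')"

end

theory Submission
  imports Defs
begin

text \<open>At the equilibrium action \<open>a\<close> of the unpenalized game \<open>G(0,0)\<close>, every fixed action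
  other than \<open>a\<close> does strictly worse against \<open>B a\<close> (strictness comes from the uniqueness of
  best responses in (A2)), and every rational strategy does no better before paying \<open>\<epsilon>\<^sub>R\<close>;
  so \<open>B a\<close> is a strict Nash equilibrium, hence an ESS. Conversely, a Nash strategy \<open>B b\<close> makes
  \<open>(b, b)\<close> an equilibrium of \<open>G(0,0)\<close>, so \<open>b = a\<close> by (A1); and \<open>R \<alpha>\<close> is never Nash, since
  \<open>B (NE(\<alpha>,\<alpha>))\<close> reproduces its play against \<open>R \<alpha>\<close> without paying \<open>\<epsilon>\<^sub>R\<close>.\<close>

lemma is_NE_pair_swap: "is_NE_pair u \<alpha>j \<alpha>i y x \<longleftrightarrow> is_NE_pair u \<alpha>i \<alpha>j x y"
  unfolding is_NE_pair_def by blast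

lemma is_NE_pair_0_diag_iff: "is_NE_pair u 0 0 b b \<longleftrightarrow> (\<forall>x. u x b \<le> u b b)"
  by (simp add: is_NE_pair_def V_def)

lemma is_NE_pair_NE:
  assumes "A1 u"
  shows "is_NE_pair u \<alpha>i \<alpha>j (NE u \<alpha>i \<alpha>j) (NE u \<alpha>j \<alpha>i)"
proof -
  have ex: "\<exists>!p. is_NE_pair u \<alpha> \<alpha>' (fst p) (snd p)" for \<alpha> \<alpha>'
    using assms unfolding A1_def by blast
  define p where "p = (THE p. is_NE_pair u \<alpha>i \<alpha>j (fst p) (snd p))"
  have p: "is_NE_pair u \<alpha>i \<alpha>j (fst p) (snd p)"
    unfolding p_def by (rule theI'[OF ex])
  have "(THE q. is_NE_pair u \<alpha>j \<alpha>i (fst q) (snd q)) = (snd p, fst p)"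
    using p by (intro the1_equality[OF ex]) (simp add: is_NE_pair_swap)
  then have "NE u \<alpha>j \<alpha>i = snd p"
    by (simp add: NE_def)
  moreover have "NE u \<alpha>i \<alpha>j = fst p"
    by (simp add: NE_def p_def)
  ultimately show ?thesis
    using p by simp
qed

lemma is_NE_pair_imp_eq_NE:
  assumes "A1 u" and "is_NE_pair u \<alpha>i \<alpha>j x y"
  shows "x = NE u \<alpha>i \<alpha>j"
proof -
  have "\<exists>!p. is_NE_pair u \<alpha>i \<alpha>j (fst p) (snd p)"
    using assms(1) unfolding A1_def by blast
  then have "(x, y) = (NE u \<alpha>i \<alpha>j, NE u \<alpha>j \<alpha>i)"
    using assms is_NE_pair_NE[OF assms(1)] by (metis fst_conv snd_conv)
  then show ?thesis by simp
qed

lemma BR_eqI: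
  assumes "A2 u" and "\<forall>a'. V u \<alpha> a' b \<le> V u \<alpha> a b"
  shows "BR u b \<alpha> = a"
proof -
  have "\<exists>!a. \<forall>a'. V u \<alpha> a' b \<le> V u \<alpha> a b"
    using assms(1) unfolding A2_def by blast
  then show ?thesis
    unfolding BR_def using assms(2) by (rule the1_equality)
qed

lemma BR_NE_diag:
  assumes "A1 u" and "A2 u"
  shows "BR u (NE u \<alpha> \<alpha>) \<alpha> = NE u \<alpha> \<alpha>"
  using is_NE_pair_NE[OF assms(1), of \<alpha> \<alpha>] by (intro BR_eqI[OF assms(2)]) (simp add: is_NE_pair_def)

lemma strict_nash_imp_ESS:
  assumes "\<sigma> \<in> \<Sigma>" and "\<And>\<sigma>'. \<sigma>' \<in> \<Sigma> \<Longrightarrow> \<sigma>' \<noteq> \<sigma> \<Longrightarrow> f \<sigma>' \<sigma> < f \<sigma> \<sigma>"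
  shows "ESS \<Sigma> f \<sigma>"
  using assms unfolding ESS_def nash_strat_def by (metis order.order_iff_strict order.irrefl)

lemma fit_lt_fit_B_NE_00:
  assumes "A1 u" and "A2 u" and "\<epsilon> > 0" and "\<sigma> \<noteq> B (NE u 0 0)"
  shows "fit u \<epsilon> \<sigma> (B (NE u 0 0)) < fit u \<epsilon> (B (NE u 0 0)) (B (NE u 0 0))"
proof -
  define a where "a = NE u 0 0"
  have a_max: "u x a \<le> u a a" for x
    using is_NE_pair_NE[OF assms(1), of 0 0] by (simp add: a_def is_NE_pair_0_diag_iff)
  show ?thesis
  proof (cases \<sigma>)
    case (B x)
    have BR_a: "BR u a 0 = y" if "\<forall>x'. u x' a \<le> u y a" for y
      using that by (intro BR_eqI[OF assms(2)]) (simp add: V_def)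
    have "u x a \<noteq> u a a"
    proof
      assume "u x a = u a a"
      then have "x = a"
        using BR_a[of x] BR_a[of a] a_max by simp
      then show False
        using B assms(4) a_def by simp
    qed
    then show ?thesis
      using a_max[of x] B by (simp add: fit_def a_def)
  next
    case (R \<alpha>)
    then show ?thesis
      using a_max[of "BR u a \<alpha>"] assms(3) by (simp add: fit_def a_def)
  qed
qed

lemma fit_R_diag_lt_fit_B_NE:
  assumes "A1 u" and "A2 u" and "\<epsilon> > 0"
  shows "fit u \<epsilon> (R \<alpha>) (R \<alpha>) < fit u \<epsilon> (B (NE u \<alpha> \<alpha>)) (R \<alpha>)"
  using BR_NE_diag[OF assms(1,2)] assms(3) by (simp add: fit_def)

lemma nash_strat_B_imp_NE_00:
  assumes "A1 u" and "nash_strat UNIV (fit u \<epsilon>) (B b)"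
  shows "b = NE u 0 0"
proof -
  have "fit u \<epsilon> (B x) (B b) \<le> fit u \<epsilon> (B b) (B b)" for x
    using assms(2) unfolding nash_strat_def by blast
  then have "is_NE_pair u 0 0 b b"
    by (simp add: fit_def is_NE_pair_0_diag_iff)
  then show ?thesis
    by (rule is_NE_pair_imp_eq_NE[OF assms(1)])
qed

theorem proposition2:
  fixes u :: payoff and \<epsilon>R :: real
  assumes "A1 u" and "A2 u" and "\<epsilon>R > 0"
  shows "(\<forall>\<sigma>. nash_strat UNIV (fit u \<epsilon>R) \<sigma> \<longleftrightarrow> \<sigma> = B (NE u 0 0))
         \<and> ESS UNIV (fit u \<epsilon>R) (B (NE u 0 0))"
proof -
  have ess: "ESS UNIV (fit u \<epsilon>R) (B (NE u 0 0))"
    using fit_lt_fit_B_NE_00[OF assms] by (intro strict_nash_imp_ESS) auto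
  have "\<sigma> = B (NE u 0 0)" if "nash_strat UNIV (fit u \<epsilon>R) \<sigma>" for \<sigma>
  proof (cases \<sigma>)
    case (B b)
    then show ?thesis
      using nash_strat_B_imp_NE_00[OF assms(1)] that by simp
  next
    case (R \<alpha>)
    have "fit u \<epsilon>R (B (NE u \<alpha> \<alpha>)) (R \<alpha>) \<le> fit u \<epsilon>R (R \<alpha>) (R \<alpha>)"
      using that R unfolding nash_strat_def by blast
    then show ?thesis
      using fit_R_diag_lt_fit_B_NE[OF assms, of \<alpha>] by simp
  qed
  then show ?thesis
    using ess unfolding ESS_def by blast
qed

end
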